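(* Let $N\ge2$, $\gamma>\tfrac12$, and let $\Gamma$ satisfy (A1) and (A2) with this $\gamma$ and constant $C_1>0$. Let the communication weight $\psi:(0,\infty)\to(0,\infty)$ be nonincreasing and have a primitive $\Psi$ (so $\Psi'=\psi$) that is singular at $0$, i.e. $|\Psi(s)|\to\infty$ as $s\to0^+$, and suppose there are constants $C>0$ and $\beta\in[0,1)$ with $$\Psi'(s)\le C\,|\Psi(s)|^{(1-\beta)2\gamma/(2\gamma-1)}\qquad\text{for all } s>0.$$ Let the initial data satisfy $x_{i0}\ne x_{j0}$ for $i\ne j$. Then any solution of the NL CS system remains non-collisional for $t>0$, and for all $t$ in its interval of existence: if $\beta>0$, $$\mathcal{L}^\beta(t)+\frac{\beta}{2C_1\gamma(N-1)}\sum_i|v_i(t)|^2\le C\,\frac{(2\gamma-1)\beta}{2\gamma}\,t+\mathcal{L}^\beta(0)+\frac{\beta}{2C_1\gamma(N-1)}\sum_i|v_{i0}|^2,$$ and if $\beta=0$, $$\mathcal{L}^0(t)+\frac{1}{2C_1\gamma(N-1)}\sum_i|v_i(t)|^2\le C\,\frac{2\gamma-1}{2\gamma}\,t+\mathcal{L}^0(0)+\frac{1}{2C_1\gamma(N-1)}\sum_i|v_{i0}|^2.$$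
   Context: The NL CS system: $\frac{d}{dt}x_i=v_i$, $\frac{d}{dt}v_i=\frac1N\sum_{j=1}^N\psi(|x_i-x_j|)\Gamma(v_j-v_i)$, $i=1,\dots,N$, with $x_i,v_i\in\mathbb{R}^d$ and initial data $(x_{i0},v_{i0})$; a solution is a $C^1$ solution on an interval on which $x_i(t)\ne x_j(t)$ for $i\ne j$. (A1): $\Gamma(-v)=-\Gamma(v)$ for all $v\in\mathbb{R}^d$. (A2): $\langle\Gamma(v),v\rangle\ge C_1|v|^{2\gamma}$ for all $v\in\mathbb{R}^d$. Sums $\sum_{i\ne j}$ are over ordered pairs $i\ne j$ in $\{1,\dots,N\}$. Define $$\mathcal{L}^\beta(t)=\frac{1}{N(N-1)}\sum_{i\ne j}|\Psi(|x_i(t)-x_j(t)|)|^\beta\ (\beta>0),\qquad \mathcal{L}^0(t)=\frac{1}{N(N-1)}\sum_{i\ne j}\log|\Psi(|x_i(t)-x_j(t)|)|.$$ *)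

theory Defs
  imports "HOL-Analysis.Analysis"
begin

definition CS_force ::
  "nat \<Rightarrow> (real \<Rightarrow> real) \<Rightarrow> ('a::euclidean_space \<Rightarrow> 'a) \<Rightarrow> (nat \<Rightarrow> real \<Rightarrow> 'a) \<Rightarrow> (nat \<Rightarrow> real \<Rightarrow> 'a) \<Rightarrow> nat \<Rightarrow> real \<Rightarrow> 'a"
  where "CS_force N psi Gam x v i t =
     (1 / real N) *\<^sub>R (\<Sum>j<N. psi (norm (x i t - x j t)) *\<^sub>R Gam (v j t - v i t))"

definition CS_solution ::
  "nat \<Rightarrow> (real \<Rightarrow> real) \<Rightarrow> ('a::euclidean_space \<Rightarrow> 'a) \<Rightarrow> real \<Rightarrow> (nat \<Rightarrow> real \<Rightarrow> 'a) \<Rightarrow> (nat \<Rightarrow> real \<Rightarrow> 'a) \<Rightarrow> bool"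
  where "CS_solution N psi Gam T x v \<longleftrightarrow>
     (\<forall>t\<in>{0..<T}. \<forall>i<N. \<forall>j<N. i \<noteq> j \<longrightarrow> x i t \<noteq> x j t) \<and>
     (\<forall>i<N. \<forall>t\<in>{0..<T}. (x i has_vector_derivative v i t) (at t within {0..<T})) \<and>
     (\<forall>i<N. \<forall>t\<in>{0..<T}. (v i has_vector_derivative CS_force N psi Gam x v i t) (at t within {0..<T})) \<and>
     (\<forall>i<N. continuous_on {0..<T} (v i)) \<and>
     (\<forall>i<N. continuous_on {0..<T} (CS_force N psi Gam x v i))"

definition L_beta ::
  "real \<Rightarrow> nat \<Rightarrow> (real \<Rightarrow> real) \<Rightarrow> (nat \<Rightarrow> real \<Rightarrow> 'a::euclidean_space) \<Rightarrow> real \<Rightarrow> real"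
  where "L_beta \<beta> N Psi x t =
     (1 / (real N * (real N - 1))) *
       (\<Sum>i<N. \<Sum>j\<in>{..<N} - {i}. \<bar>Psi (norm (x i t - x j t))\<bar> powr \<beta>)"

definition L_zero ::
  "nat \<Rightarrow> (real \<Rightarrow> real) \<Rightarrow> (nat \<Rightarrow> real \<Rightarrow> 'a::euclidean_space) \<Rightarrow> real \<Rightarrow> real"
  where "L_zero N Psi x t =
     (1 / (real N * (real N - 1))) *
       (\<Sum>i<N. \<Sum>j\<in>{..<N} - {i}. ln \<bar>Psi (norm (x i t - x j t))\<bar>)"

end

theory Submission
  imports Defs
begin

text \<open>Write \<open>r\<^sub>i\<^sub>j = |x\<^sub>i - x\<^sub>j|\<close>. \<open>Psi\<close> is increasing and, by the growth bound, never vanishes,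
  so the singularity at \<open>0\<close> forces \<open>Psi < 0\<close> and \<open>|Psi(r\<^sub>i\<^sub>j)|\<close> blows up exactly at a collision.
  For \<open>h y = y powr \<beta>\<close> (\<open>\<beta> > 0\<close>) or \<open>h = ln\<close> (\<open>\<beta> = 0\<close>) one has \<open>h' y = c y powr (\<beta> - 1)\<close>,
  whence \<open>d/dt h |Psi(r\<^sub>i\<^sub>j)| \<le> c |Psi(r\<^sub>i\<^sub>j)| powr (\<beta> - 1) psi(r\<^sub>i\<^sub>j) |v\<^sub>j - v\<^sub>i|\<close>. By (A1) and (A2)
  the kinetic energy decays at rate at least \<open>(C\<^sub>1/N) \<Sum>\<^sub>i\<^sub>\<noteq>\<^sub>j psi(r\<^sub>i\<^sub>j) |v\<^sub>j - v\<^sub>i| powr (2\<gamma>)\<close>, and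
  Young's inequality with exponents \<open>2\<gamma>\<close> and \<open>2\<gamma>/(2\<gamma> - 1)\<close>, combined with the growth bound,
  absorbs each pair rate into this dissipation up to the constant \<open>C (2\<gamma> - 1)/(2\<gamma>)\<close>. A bound on the functional bounds every \<open>|Psi(r\<^sub>i\<^sub>j)|\<close>, which
  keeps the agents apart; for \<open>\<beta> = 0\<close> this also needs \<open>ln |Psi(r\<^sub>i\<^sub>j)|\<close> bounded below, which
  holds because the decaying kinetic energy lets the agents travel only a bounded distance.\<close>

lemma has_real_derivative_inner_self:
  fixes f :: "real \<Rightarrow> 'a::real_inner"
  assumes "(f has_vector_derivative f') (at t within S)"
  shows "((\<lambda>t. inner (f t) (f t)) has_real_derivative 2 * inner (f t) f') (at t within S)"
proof -
  have "((\<lambda>t. inner (f t) (f t)) has_derivative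
      (\<lambda>h. inner (f t) (h *\<^sub>R f') + inner (h *\<^sub>R f') (f t))) (at t within S)"
    using assms unfolding has_vector_derivative_def by (intro has_derivative_inner)
  then show ?thesis unfolding has_field_derivative_def
    by (rule has_derivative_eq_rhs) (auto simp: fun_eq_iff inner_commute algebra_simps)
qed

lemma has_real_derivative_norm:
  fixes f :: "real \<Rightarrow> 'a::real_inner"
  assumes "(f has_vector_derivative f') (at t within S)" and "f t \<noteq> 0"
  shows "((\<lambda>t. norm (f t)) has_real_derivative inner (sgn (f t)) f') (at t within S)"
  using has_derivative_compose[OF assms(1)[unfolded has_vector_derivative_def]
      has_derivative_norm[OF assms(2)]]
  unfolding has_field_derivative_def
  by (rule has_derivative_eq_rhs) (auto simp: fun_eq_iff inner_commute)

lemma has_real_derivative_le_imp_le: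
  fixes f f' :: "real \<Rightarrow> real"
  assumes deriv: "\<And>s. s \<in> {a..<b} \<Longrightarrow> (f has_real_derivative f' s) (at s within {a..<b})"
    and le: "\<And>s. s \<in> {a..<b} \<Longrightarrow> f' s \<le> K"
    and t: "t \<in> {a..<b}"
  shows "f t \<le> f a + K * (t - a)"
proof (cases "t = a")
  case False
  with t have "a < t" by auto
  have "continuous_on {a..<b} f"
    unfolding continuous_on_eq_continuous_within using deriv DERIV_continuous by blast
  then have cont: "continuous_on {a..t} f" by (rule continuous_on_subset) (use t in auto)
  have deriv_at: "(f has_real_derivative f' z) (at z)" if "a < z" "z < t" for z
  proof -
    have "z \<in> interior {a..<b}" using that t by auto
    then have "at z within {a..<b} = at z" by (rule at_within_interior)
    with deriv[of z] that t show ?thesis by auto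
  qed
  obtain l z where z: "a < z" "z < t" "(f has_real_derivative l) (at z)" "f t - f a = (t - a) * l"
    using MVT[OF \<open>a < t\<close> cont] deriv_at real_differentiable_def by blast
  have "l = f' z" using DERIV_unique z deriv_at by blast
  with le[of z] z t have "l \<le> K" by auto
  then have "l * (t - a) \<le> K * (t - a)" using \<open>a < t\<close> by (intro mult_right_mono) auto
  with z(4) show ?thesis by (simp add: algebra_simps)
qed simp

lemma Young_absorption:
  fixes p g w a C \<beta> :: real
  assumes p: "p > 1" and g: "g > 0" and w: "w \<ge> 0" and a: "a \<ge> 0"
    and growth: "w \<le> C * g powr ((1 - \<beta>) * (p / (p - 1)))"
  shows "g powr (\<beta> - 1) * w * a - w * a powr p / p \<le> C * ((p - 1) / p)"
proof -
  define q where "q = p / (p - 1)"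
  have q: "q > 1" and pq: "1 / p + 1 / q = 1" using p by (simp_all add: q_def field_simps)
  have Young: "a * g powr (\<beta> - 1) \<le> a powr p / p + (g powr (\<beta> - 1)) powr q / q"
    by (rule Youngs_inequality[OF p q pq a]) simp
  have "w * (g powr (\<beta> - 1)) powr q = w * g powr ((\<beta> - 1) * q)"
    by (simp add: powr_powr)
  also have "\<dots> \<le> C * g powr ((1 - \<beta>) * q) * g powr ((\<beta> - 1) * q)"
    using growth by (intro mult_right_mono) (simp_all add: q_def)
  also have "\<dots> = C"
    using g by (simp add: mult.assoc flip: powr_add) (simp add: algebra_simps)
  finally have weight: "w * (g powr (\<beta> - 1)) powr q \<le> C" .
  have "g powr (\<beta> - 1) * w * a \<le> w * (a powr p / p + (g powr (\<beta> - 1)) powr q / q)"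
    using mult_left_mono[OF Young w] by (simp add: algebra_simps)
  also have "\<dots> \<le> w * a powr p / p + C / q"
    using weight q by (simp add: distrib_left divide_right_mono)
  finally show ?thesis using p by (simp add: q_def)
qed

lemma offdiagonal_sum_member_le:
  fixes \<phi> :: "nat \<Rightarrow> nat \<Rightarrow> real"
  assumes ij: "i < N" "j < N" "i \<noteq> j"
    and lower: "\<And>k l. k < N \<Longrightarrow> l < N \<Longrightarrow> k \<noteq> l \<Longrightarrow> lo \<le> \<phi> k l"
  shows "\<phi> i j \<le> (\<Sum>k<N. \<Sum>l\<in>{..<N} - {k}. \<phi> k l) - real N * (real N - 1) * lo + lo"
proof -
  have excess: "lo \<le> \<phi> k l" if "k < N" "l \<in> {..<N} - {k}" for k l
    using lower that by auto
  have "\<phi> i j - lo \<le> (\<Sum>l\<in>{..<N} - {i}. \<phi> i l - lo)"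
    by (rule member_le_sum[where f = "\<lambda>l. \<phi> i l - lo"]) (use ij excess in simp_all)
  also have "\<dots> \<le> (\<Sum>k<N. \<Sum>l\<in>{..<N} - {k}. \<phi> k l - lo)"
    by (rule member_le_sum[where f = "\<lambda>k. \<Sum>l\<in>{..<N} - {k}. \<phi> k l - lo"])
      (use ij in \<open>auto intro!: sum_nonneg excess\<close>)
  also have "\<dots> = (\<Sum>k<N. \<Sum>l\<in>{..<N} - {k}. \<phi> k l) - real N * (real N - 1) * lo"
    using ij by (simp add: sum_subtractf card_Diff_singleton of_nat_diff)
  finally show ?thesis by simp
qed

lemma filterlim_powr_at_top:
  fixes \<beta> :: real
  assumes "\<beta> > 0"
  shows "filterlim (\<lambda>y. y powr \<beta>) at_top at_top"
proof -
  have lim: "filterlim (\<lambda>y. exp (\<beta> * ln y)) at_top at_top"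
    by (intro filterlim_compose[OF exp_at_top] filterlim_tendsto_pos_mult_at_top[OF tendsto_const]
        assms ln_at_top)
  have eq: "\<forall>\<^sub>F y in at_top. exp (\<beta> * ln y) = y powr \<beta>"
    using eventually_gt_at_top[of 0] by eventually_elim (simp add: powr_def)
  show ?thesis using filterlim_cong[OF refl refl eq] lim by (rule iffD1)
qed

lemma uniformly_positive_if_bounded_singular:
  fixes G :: "real \<Rightarrow> real" and d :: "'b \<Rightarrow> real"
  assumes sing: "filterlim G at_top (at_right 0)"
    and pos: "\<And>z. P z \<Longrightarrow> 0 < d z" and bounded: "\<And>z. P z \<Longrightarrow> G (d z) \<le> M"
  shows "\<exists>\<delta>>0. \<forall>z. P z \<longrightarrow> \<delta> \<le> d z"
proof -
  have "\<forall>\<^sub>F r in at_right 0. G r > M"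
    using sing by (simp add: filterlim_at_top_dense)
  then obtain \<delta> where "\<delta> > 0" and \<delta>: "\<And>r. 0 < r \<Longrightarrow> r < \<delta> \<Longrightarrow> G r > M"
    unfolding eventually_at_right_field by auto
  have "\<delta> \<le> d z" if "P z" for z
  proof (rule ccontr)
    assume "\<not> \<delta> \<le> d z"
    with \<delta> pos[OF that] have "G (d z) > M" by simp
    with bounded[OF that] show False by simp
  qed
  with \<open>\<delta> > 0\<close> show ?thesis by blast
qed

lemma primitive_of_positive_mono:
  fixes \<Psi> \<psi> :: "real \<Rightarrow> real"
  assumes deriv: "\<forall>s>0. (\<Psi> has_real_derivative \<psi> s) (at s)" and pos: "\<forall>s>0. \<psi> s > 0"
    and "0 < s" "s \<le> r"
  shows "\<Psi> s \<le> \<Psi> r"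
proof (cases "s = r")
  case False
  with assms(4) have "s < r" by simp
  then have "\<Psi> s < \<Psi> r"
  proof (rule DERIV_pos_imp_increasing)
    fix y assume "s \<le> y"
    with \<open>0 < s\<close> have "0 < y" by simp
    then show "\<exists>d. (\<Psi> has_real_derivative d) (at y) \<and> d > 0"
      using deriv pos by blast
  qed
  then show ?thesis by simp
qed simp

lemma singular_primitive_neg:
  fixes \<Psi> \<psi> :: "real \<Rightarrow> real"
  assumes deriv: "\<forall>s>0. (\<Psi> has_real_derivative \<psi> s) (at s)" and pos: "\<forall>s>0. \<psi> s > 0"
    and nonzero: "\<forall>s>0. \<Psi> s \<noteq> 0" and sing: "filterlim (\<lambda>s. \<bar>\<Psi> s\<bar>) at_top (at_right 0)"
    and "0 < s"
  shows "\<Psi> s < 0"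
proof (rule ccontr)
  assume "\<not> \<Psi> s < 0"
  with nonzero \<open>0 < s\<close> have "\<Psi> s > 0" by force
  have "\<forall>\<^sub>F r in at_right 0. \<bar>\<Psi> r\<bar> > \<Psi> s"
    using sing by (simp add: filterlim_at_top_dense)
  moreover have "\<forall>\<^sub>F r in at_right 0. r \<in> {0<..<s}"
    using eventually_at_right_real[OF \<open>0 < s\<close>] .
  ultimately obtain r where r: "\<bar>\<Psi> r\<bar> > \<Psi> s" "r < s" "0 < r"
    using eventually_happens[OF eventually_conj] trivial_limit_at_right_real by force
  have "\<Psi> r \<le> \<Psi> s" using primitive_of_positive_mono[OF deriv pos \<open>0 < r\<close>] r(2) by simp
  with r(1) \<open>\<Psi> s > 0\<close> have "\<Psi> r < 0" by (simp add: abs_if split: if_splits)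
  have "\<forall>y. r \<le> y \<and> y \<le> s \<longrightarrow> isCont \<Psi> y"
    using deriv r DERIV_isCont less_le_trans by blast
  then obtain z where "r \<le> z" "z \<le> s" "\<Psi> z = 0"
    using IVT[of \<Psi> r 0 s] \<open>\<Psi> r < 0\<close> \<open>\<Psi> s > 0\<close> r by auto
  with nonzero r show False by auto
qed

locale CS_flow =
  fixes N :: nat and psi :: "real \<Rightarrow> real" and Gam :: "'a::euclidean_space \<Rightarrow> 'a"
    and T :: real and x v :: "nat \<Rightarrow> real \<Rightarrow> 'a"
  assumes N2: "N \<ge> 2"
    and psi_pos: "\<forall>s>0. psi s > 0"
    and A1: "\<forall>w. Gam (- w) = - Gam w"
    and sol: "CS_solution N psi Gam T x v"
begin

abbreviation r :: "nat \<Rightarrow> nat \<Rightarrow> real \<Rightarrow> real"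
  where "r i j t \<equiv> norm (x i t - x j t)"

abbreviation dist_rate :: "nat \<Rightarrow> nat \<Rightarrow> real \<Rightarrow> real"
  where "dist_rate i j t \<equiv> inner (sgn (x i t - x j t)) (v i t - v j t)"

abbreviation kinetic_energy :: "real \<Rightarrow> real"
  where "kinetic_energy t \<equiv> \<Sum>i<N. (norm (v i t))\<^sup>2"

abbreviation kinetic_energy_rate :: "real \<Rightarrow> real"
  where "kinetic_energy_rate t \<equiv> \<Sum>i<N. 2 * inner (v i t) (CS_force N psi Gam x v i t)"

lemma distance_pos: "t \<in> {0..<T} \<Longrightarrow> i < N \<Longrightarrow> j < N \<Longrightarrow> i \<noteq> j \<Longrightarrow> 0 < r i j t"
  using sol unfolding CS_solution_def by auto

lemma psi_distance_pos: "t \<in> {0..<T} \<Longrightarrow> i < N \<Longrightarrow> j < N \<Longrightarrow> i \<noteq> j \<Longrightarrow> 0 < psi (r i j t)"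
  using psi_pos distance_pos by blast

lemma position_has_derivative:
  "i < N \<Longrightarrow> t \<in> {0..<T} \<Longrightarrow> (x i has_vector_derivative v i t) (at t within {0..<T})"
  using sol unfolding CS_solution_def by blast

lemma velocity_has_derivative:
  "i < N \<Longrightarrow> t \<in> {0..<T} \<Longrightarrow>
    (v i has_vector_derivative CS_force N psi Gam x v i t) (at t within {0..<T})"
  using sol unfolding CS_solution_def by blast

lemma distance_has_derivative:
  assumes "i < N" "j < N" "i \<noteq> j" "t \<in> {0..<T}"
  shows "(r i j has_real_derivative dist_rate i j t) (at t within {0..<T})"
  using has_real_derivative_norm[OF has_vector_derivative_diff
      [OF position_has_derivative position_has_derivative]] distance_pos assms
  by simp

lemma kinetic_energy_has_derivative:
  "t \<in> {0..<T} \<Longrightarrow> (kinetic_energy has_real_derivative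
     kinetic_energy_rate t) (at t within {0..<T})"
  unfolding power2_norm_eq_inner
  by (rule DERIV_sum) (rule has_real_derivative_inner_self[OF velocity_has_derivative], simp)

text \<open>Symmetrisation over \<open>i \<leftrightarrow> j\<close>, using the oddness (A1) of \<open>Gam\<close>.\<close>
lemma kinetic_energy_derivative_eq:
  "kinetic_energy_rate t =
     - (1 / real N) * (\<Sum>i<N. \<Sum>j<N. psi (r i j t) * inner (Gam (v j t - v i t)) (v j t - v i t))"
proof -
  define a where "a i j = psi (r i j t) * inner (v i t) (Gam (v j t - v i t))" for i j
  have swap: "a i j + a j i = - (psi (r i j t) * inner (Gam (v j t - v i t)) (v j t - v i t))" for i j
  proof -
    have "Gam (v i t - v j t) = - Gam (v j t - v i t)"
      using A1[rule_format, of "v j t - v i t"] by simp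
    then show ?thesis
      by (simp add: a_def norm_minus_commute inner_diff_right inner_commute algebra_simps)
  qed
  have "kinetic_energy_rate t = 1 / real N * (2 * (\<Sum>i<N. \<Sum>j<N. a i j))"
    by (simp add: CS_force_def a_def inner_sum_right sum_distrib_left)
  also have "2 * (\<Sum>i<N. \<Sum>j<N. a i j) = (\<Sum>i<N. \<Sum>j<N. a i j) + (\<Sum>i<N. \<Sum>j<N. a j i)"
    using sum.swap[of a "{..<N}" "{..<N}"] by simp
  also have "\<dots> = (\<Sum>i<N. \<Sum>j<N. - (psi (r i j t) * inner (Gam (v j t - v i t)) (v j t - v i t)))"
    by (simp add: swap flip: sum.distrib)
  finally show ?thesis by (simp add: sum_negf)
qed

end

locale CS_singular = CS_flow N psi Gam T x v
  for N :: nat and psi :: "real \<Rightarrow> real" and Gam :: "'a::euclidean_space \<Rightarrow> 'a"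
    and T :: real and x v :: "nat \<Rightarrow> real \<Rightarrow> 'a" +
  fixes \<gamma> C\<^sub>1 C \<beta> :: real and Psi :: "real \<Rightarrow> real"
  assumes gamma: "\<gamma> > 1/2"
    and C1_pos: "C\<^sub>1 > 0"
    and A2: "\<forall>w. inner (Gam w) w \<ge> C\<^sub>1 * norm w powr (2 * \<gamma>)"
    and Psi_prim: "\<forall>s>0. (Psi has_real_derivative psi s) (at s)"
    and Psi_sing: "filterlim (\<lambda>s. \<bar>Psi s\<bar>) at_top (at_right 0)"
    and C_pos: "C > 0"
    and growth: "\<forall>s>0. psi s \<le> C * \<bar>Psi s\<bar> powr ((1 - \<beta>) * (2 * \<gamma>) / (2 * \<gamma> - 1))"
    and T_pos: "T > 0"
begin

abbreviation dissipation :: "nat \<Rightarrow> nat \<Rightarrow> real \<Rightarrow> real"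
  where "dissipation i j t \<equiv> psi (r i j t) * norm (v j t - v i t) powr (2 * \<gamma>)"

abbreviation pair_rate :: "nat \<Rightarrow> nat \<Rightarrow> real \<Rightarrow> real"
  where "pair_rate i j t \<equiv> \<bar>Psi (r i j t)\<bar> powr (\<beta> - 1) * psi (r i j t) * norm (v j t - v i t)"

lemma kinetic_energy_derivative_le:
  assumes t: "t \<in> {0..<T}"
  shows "kinetic_energy_rate t
    \<le> - (C\<^sub>1 / real N) * (\<Sum>i<N. \<Sum>j\<in>{..<N} - {i}. dissipation i j t)"
proof -
  define D where "D i j = psi (r i j t) * inner (Gam (v j t - v i t)) (v j t - v i t)" for i j
  have pair: "C\<^sub>1 * dissipation i j t \<le> D i j"
    if "i < N" "j \<in> {..<N} - {i}" for i j
  proof -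
    have "psi (r i j t) * (C\<^sub>1 * norm (v j t - v i t) powr (2 * \<gamma>))
        \<le> psi (r i j t) * inner (Gam (v j t - v i t)) (v j t - v i t)"
      using A2 less_imp_le[OF psi_distance_pos[OF t, of i j]] that by (intro mult_left_mono) auto
    then show ?thesis by (simp add: D_def mult.left_commute)
  qed
  have diagonal: "(\<Sum>j<N. D i j) = (\<Sum>j\<in>{..<N} - {i}. D i j)" if "i < N" for i
    using that by (simp add: sum.remove[of "{..<N}" i] D_def)
  have "C\<^sub>1 * (\<Sum>i<N. \<Sum>j\<in>{..<N} - {i}. dissipation i j t)
      \<le> (\<Sum>i<N. \<Sum>j\<in>{..<N} - {i}. D i j)"
    unfolding sum_distrib_left by (intro sum_mono pair) auto
  also have "\<dots> = (\<Sum>i<N. \<Sum>j<N. D i j)" by (simp add: diagonal)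
  finally show ?thesis
    using N2 unfolding kinetic_energy_derivative_eq D_def by (simp add: field_simps)
qed

lemma kinetic_energy_le: "t \<in> {0..<T} \<Longrightarrow> kinetic_energy t \<le> kinetic_energy 0"
proof -
  have "kinetic_energy_rate s \<le> 0" if s: "s \<in> {0..<T}" for s
  proof -
    have pair: "0 \<le> dissipation i j s"
      if "i \<in> {..<N}" "j \<in> {..<N} - {i}" for i j
      using psi_distance_pos[OF s, of i j] that by simp
    have "0 \<le> (\<Sum>i<N. \<Sum>j\<in>{..<N} - {i}. dissipation i j s)"
      by (intro sum_nonneg pair)
    then have "0 \<le> (C\<^sub>1 / real N) * (\<Sum>i<N. \<Sum>j\<in>{..<N} - {i}. dissipation i j s)"
      using C1_pos by simp
    with kinetic_energy_derivative_le[OF s] show ?thesis by linarith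
  qed
  from has_real_derivative_le_imp_le[OF kinetic_energy_has_derivative this] show "t \<in> {0..<T} \<Longrightarrow> ?thesis"
    by simp
qed

lemma displacement_le:
  assumes t: "t \<in> {0..<T}" and i: "i < N"
  shows "norm (x i t - x i 0) \<le> sqrt (kinetic_energy 0) * T"
proof -
  have speed: "norm (v i s) \<le> sqrt (kinetic_energy 0)" if "s \<in> {0..<T}" for s
  proof -
    have "(norm (v i s))\<^sup>2 \<le> kinetic_energy s"
      by (rule member_le_sum[where f = "\<lambda>k. (norm (v k s))\<^sup>2"]) (use i in auto)
    also have "\<dots> \<le> kinetic_energy 0" by (rule kinetic_energy_le[OF that])
    finally show ?thesis using real_le_rsqrt by blast
  qed
  have "norm (x i t - x i 0) \<le> sqrt (kinetic_energy 0) * norm (t - 0)"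
  proof (rule differentiable_bound[where f' = "\<lambda>s h. h *\<^sub>R v i s"])
    show "(x i has_derivative (\<lambda>h. h *\<^sub>R v i s)) (at s within {0..<T})" if "s \<in> {0..<T}" for s
      using position_has_derivative[OF i that] unfolding has_vector_derivative_def .
    show "onorm (\<lambda>h. h *\<^sub>R v i s) \<le> sqrt (kinetic_energy 0)" if "s \<in> {0..<T}" for s
      using speed[OF that] by (simp add: onorm_scaleR_left[OF bounded_linear_ident] onorm_id)
  qed (use t T_pos in auto)
  also have "\<dots> \<le> sqrt (kinetic_energy 0) * T" using t by (intro mult_left_mono) (auto intro: sum_nonneg)
  finally show ?thesis .
qed

lemma Psi_neg: "0 < s \<Longrightarrow> Psi s < 0"
proof (rule singular_primitive_neg[OF Psi_prim psi_pos _ Psi_sing])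
  \<comment> \<open>a zero of \<open>Psi\<close> would give \<open>psi s \<le> C * 0 powr _ = 0\<close>\<close>
  show "\<forall>s>0. Psi s \<noteq> 0"
    using growth psi_pos by (metis abs_zero less_le_not_le mult_zero_right powr_0)
qed

lemma abs_Psi_distance_pos:
  "t \<in> {0..<T} \<Longrightarrow> i < N \<Longrightarrow> j < N \<Longrightarrow> i \<noteq> j \<Longrightarrow> 0 < \<bar>Psi (r i j t)\<bar>"
  using Psi_neg[OF distance_pos] by fastforce

lemma Psi_mono: "0 < s \<Longrightarrow> s \<le> s' \<Longrightarrow> Psi s \<le> Psi s'"
  by (rule primitive_of_positive_mono[OF Psi_prim psi_pos])

lemma abs_Psi_distance_has_derivative:
  assumes ij: "i < N" "j < N" "i \<noteq> j" and t: "t \<in> {0..<T}"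
  shows "((\<lambda>t. \<bar>Psi (r i j t)\<bar>) has_real_derivative
      - (psi (r i j t) * dist_rate i j t)) (at t within {0..<T})"
proof -
  have "((\<lambda>t. - Psi (r i j t)) has_real_derivative
      - (psi (r i j t) * dist_rate i j t)) (at t within {0..<T})"
    using DERIV_chain2[OF Psi_prim[rule_format, OF distance_pos[OF t ij]]
        distance_has_derivative[OF ij t]] by (rule DERIV_minus)
  then show ?thesis
  proof (rule has_field_derivative_transform_within[where d = 1])
    show "- Psi (r i j s) = \<bar>Psi (r i j s)\<bar>" if "s \<in> {0..<T}" for s
      using Psi_neg[OF distance_pos[OF that ij]] by simp
  qed (use t in simp_all)
qed

lemma abs_Psi_distance_rate_le:
  assumes ij: "i < N" "j < N" "i \<noteq> j" and t: "t \<in> {0..<T}" and "c \<ge> 0"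
  shows "c * \<bar>Psi (r i j t)\<bar> powr (\<beta> - 1) * - (psi (r i j t) * dist_rate i j t)
    \<le> c * pair_rate i j t"
proof -
  have "- dist_rate i j t \<le> norm (sgn (x i t - x j t)) * norm (v i t - v j t)"
    using Cauchy_Schwarz_ineq2[of "sgn (x i t - x j t)" "v i t - v j t"] by linarith
  also have "\<dots> \<le> norm (v j t - v i t)"
    by (simp add: norm_sgn norm_minus_commute)
  finally have "c * \<bar>Psi (r i j t)\<bar> powr (\<beta> - 1) * psi (r i j t) * - dist_rate i j t
      \<le> c * \<bar>Psi (r i j t)\<bar> powr (\<beta> - 1) * psi (r i j t) * norm (v j t - v i t)"
    using \<open>c \<ge> 0\<close> less_imp_le[OF psi_distance_pos[OF t ij]] by (intro mult_left_mono) auto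
  then show ?thesis by (simp add: mult_ac)
qed

definition potential :: "(real \<Rightarrow> real) \<Rightarrow> real \<Rightarrow> real"
  where "potential h t =
    1 / (real N * (real N - 1)) * (\<Sum>i<N. \<Sum>j\<in>{..<N} - {i}. h \<bar>Psi (r i j t)\<bar>)"

lemma L_beta_eq_potential: "L_beta b N Psi x = potential (\<lambda>y. y powr b)"
  by (simp add: fun_eq_iff L_beta_def potential_def)

lemma L_zero_eq_potential: "L_zero N Psi x = potential ln"
  by (simp add: fun_eq_iff L_zero_def potential_def)

lemma potential_has_derivative:
  assumes h: "\<And>y. y > 0 \<Longrightarrow> (h has_real_derivative c * y powr (\<beta> - 1)) (at y)"
    and t: "t \<in> {0..<T}"
  shows "(potential h has_real_derivative 1 / (real N * (real N - 1)) *
      (\<Sum>i<N. \<Sum>j\<in>{..<N} - {i}. c * \<bar>Psi (r i j t)\<bar> powr (\<beta> - 1) * - (psi (r i j t) * dist_rate i j t)))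
    (at t within {0..<T})"
proof -
  have "((\<lambda>t. h \<bar>Psi (r i j t)\<bar>) has_real_derivative
      c * \<bar>Psi (r i j t)\<bar> powr (\<beta> - 1) * - (psi (r i j t) * dist_rate i j t)) (at t within {0..<T})"
    if "i < N" "j \<in> {..<N} - {i}" for i j
    using that abs_Psi_distance_pos[OF t, of i j]
    by (intro DERIV_chain2[OF h] abs_Psi_distance_has_derivative[OF _ _ _ t]) auto
  then show ?thesis
    unfolding potential_def[abs_def] by (intro DERIV_cmult DERIV_sum) auto
qed

lemma pair_rates_absorbed:
  assumes t: "t \<in> {0..<T}"
  shows "1 / (real N * (real N - 1)) * (\<Sum>i<N. \<Sum>j\<in>{..<N} - {i}. pair_rate i j t)
      - 1 / (2 * \<gamma> * real N * (real N - 1)) * (\<Sum>i<N. \<Sum>j\<in>{..<N} - {i}. dissipation i j t)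
    \<le> C * ((2 * \<gamma> - 1) / (2 * \<gamma>))"
proof -
  define K where "K = C * ((2 * \<gamma> - 1) / (2 * \<gamma>))"
  define M where "M = real N * (real N - 1)"
  define SY where "SY = (\<Sum>i<N. \<Sum>j\<in>{..<N} - {i}. pair_rate i j t)"
  define SZ where "SZ = (\<Sum>i<N. \<Sum>j\<in>{..<N} - {i}. dissipation i j t)"
  have M: "M > 0" using N2 by (simp add: M_def)
  have pair: "pair_rate i j t - dissipation i j t / (2 * \<gamma>) \<le> K"
    if "i < N" "j \<in> {..<N} - {i}" for i j
  proof -
    have "psi (r i j t) \<le> C * \<bar>Psi (r i j t)\<bar> powr ((1 - \<beta>) * (2 * \<gamma> / (2 * \<gamma> - 1)))"
      using growth distance_pos[OF t] that by auto
    then show ?thesis unfolding K_def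
      using that gamma abs_Psi_distance_pos[OF t, of i j] less_imp_le[OF psi_distance_pos[OF t, of i j]]
      by (intro Young_absorption) auto
  qed
  have "SY - SZ / (2 * \<gamma>) = (\<Sum>i<N. \<Sum>j\<in>{..<N} - {i}. pair_rate i j t - dissipation i j t / (2 * \<gamma>))"
    by (simp add: SY_def SZ_def sum_subtractf sum_divide_distrib)
  also have "\<dots> \<le> (\<Sum>i<N. \<Sum>j\<in>{..<N} - {i}. K)"
    by (intro sum_mono pair) auto
  also have "\<dots> = M * K"
    using N2 by (simp add: M_def card_Diff_singleton of_nat_diff)
  finally have "(SY - SZ / (2 * \<gamma>)) / M \<le> K"
    using M by (simp add: pos_divide_le_eq mult.commute)
  moreover have "1 / M * SY - 1 / (2 * \<gamma> * real N * (real N - 1)) * SZ = (SY - SZ / (2 * \<gamma>)) / M"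
    using M gamma unfolding mult.assoc[of "2 * \<gamma>"] M_def[symmetric] by (simp add: field_simps)
  ultimately show ?thesis by (simp add: M_def K_def SY_def SZ_def)
qed

lemma potential_estimate:
  assumes c: "c > 0"
    and h: "\<And>y. y > 0 \<Longrightarrow> (h has_real_derivative c * y powr (\<beta> - 1)) (at y)"
    and t: "t \<in> {0..<T}"
  shows "potential h t + c / (2 * C\<^sub>1 * \<gamma> * (real N - 1)) * kinetic_energy t
    \<le> potential h 0 + c / (2 * C\<^sub>1 * \<gamma> * (real N - 1)) * kinetic_energy 0
      + c * C * ((2 * \<gamma> - 1) / (2 * \<gamma>)) * t"
proof -
  \<comment> \<open>\<open>B\<close> is chosen so that \<open>B C\<^sub>1 / N\<close> is \<open>c / N(N-1)\<close> times Young's weight \<open>1/(2\<gamma>)\<close>.\<close>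
  define B where "B = c / (2 * C\<^sub>1 * \<gamma> * (real N - 1))"
  define P' where "P' s = 1 / (real N * (real N - 1)) * (\<Sum>i<N. \<Sum>j\<in>{..<N} - {i}.
      c * \<bar>Psi (r i j s)\<bar> powr (\<beta> - 1) * - (psi (r i j s) * dist_rate i j s))"
    for s
  have N1: "real N - 1 > 0" using N2 by simp
  have rate: "P' s + B * kinetic_energy_rate s \<le> c * C * ((2 * \<gamma> - 1) / (2 * \<gamma>))"
    if s: "s \<in> {0..<T}" for s
  proof -
    define SY where "SY = (\<Sum>i<N. \<Sum>j\<in>{..<N} - {i}. pair_rate i j s)"
    define SZ where "SZ = (\<Sum>i<N. \<Sum>j\<in>{..<N} - {i}. dissipation i j s)"
    have "P' s \<le> 1 / (real N * (real N - 1)) * (\<Sum>i<N. \<Sum>j\<in>{..<N} - {i}. c * pair_rate i j s)"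
      unfolding P'_def using N1 c abs_Psi_distance_rate_le[OF _ _ _ s]
      by (intro mult_left_mono sum_mono) auto
    also have "\<dots> = c * (1 / (real N * (real N - 1)) * SY)"
      by (simp add: SY_def sum_distrib_left)
    finally have "P' s \<le> c * (1 / (real N * (real N - 1)) * SY)" .
    moreover have "B * kinetic_energy_rate s \<le> B * (- (C\<^sub>1 / real N) * SZ)"
      using kinetic_energy_derivative_le[OF s] c C1_pos gamma N1
      by (intro mult_left_mono) (simp_all add: B_def SZ_def)
    moreover have "B * (- (C\<^sub>1 / real N) * SZ) = - c * (1 / (2 * \<gamma> * real N * (real N - 1)) * SZ)"
      using C1_pos gamma N1 N2 by (simp add: B_def field_simps)
    moreover have "c * (1 / (real N * (real N - 1)) * SY - 1 / (2 * \<gamma> * real N * (real N - 1)) * SZ)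
        \<le> c * (C * ((2 * \<gamma> - 1) / (2 * \<gamma>)))"
      using pair_rates_absorbed[OF s] c unfolding SY_def SZ_def by (intro mult_left_mono) auto
    ultimately show ?thesis by (simp add: right_diff_distrib mult.assoc)
  qed
  have "((\<lambda>s. potential h s + B * kinetic_energy s) has_real_derivative
      P' s + B * kinetic_energy_rate s) (at s within {0..<T})" if "s \<in> {0..<T}" for s
    unfolding P'_def
    by (intro DERIV_add DERIV_cmult potential_has_derivative[OF h] kinetic_energy_has_derivative that)
  from has_real_derivative_le_imp_le[OF this rate t] show ?thesis
    by (simp add: B_def algebra_simps)
qed

lemma separated_if_potential_bounded_below:
  assumes c: "c > 0"
    and h: "\<And>y. y > 0 \<Longrightarrow> (h has_real_derivative c * y powr (\<beta> - 1)) (at y)"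
    and h_top: "filterlim h at_top at_top"
    and lower: "\<forall>t\<in>{0..<T}. \<forall>i<N. \<forall>j<N. i \<noteq> j \<longrightarrow> lo \<le> h \<bar>Psi (r i j t)\<bar>"
  shows "\<exists>\<delta>>0. \<forall>t\<in>{0..<T}. \<forall>i<N. \<forall>j<N. i \<noteq> j \<longrightarrow> \<delta> \<le> r i j t"
proof -
  define B where "B = c / (2 * C\<^sub>1 * \<gamma> * (real N - 1))"
  define M0 where "M0 = potential h 0 + B * kinetic_energy 0 + c * C * ((2 * \<gamma> - 1) / (2 * \<gamma>)) * T"
  define M where "M = real N * (real N - 1) * M0 - real N * (real N - 1) * lo + lo"
  have N1: "real N - 1 > 0" using N2 by simp
  have bound: "h \<bar>Psi (r i j t)\<bar> \<le> M" if t: "t \<in> {0..<T}" and ij: "i < N" "j < N" "i \<noteq> j" for t i j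
  proof -
    have "0 \<le> B * kinetic_energy t"
      using c C1_pos gamma N1 by (simp add: B_def sum_nonneg)
    moreover have "c * C * ((2 * \<gamma> - 1) / (2 * \<gamma>)) * t \<le> c * C * ((2 * \<gamma> - 1) / (2 * \<gamma>)) * T"
      using c C_pos gamma t by (intro mult_left_mono) auto
    ultimately have "potential h t \<le> M0"
      using potential_estimate[OF c h t] unfolding M0_def B_def by linarith
    then have "(\<Sum>k<N. \<Sum>l\<in>{..<N} - {k}. h \<bar>Psi (r k l t)\<bar>) \<le> real N * (real N - 1) * M0"
      using N1 N2 by (simp add: potential_def field_simps)
    moreover have "h \<bar>Psi (r i j t)\<bar>
        \<le> (\<Sum>k<N. \<Sum>l\<in>{..<N} - {k}. h \<bar>Psi (r k l t)\<bar>) - real N * (real N - 1) * lo + lo"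
      by (rule offdiagonal_sum_member_le[OF ij]) (use lower t in auto)
    ultimately show ?thesis unfolding M_def by linarith
  qed
  have "\<exists>\<delta>>0. \<forall>z. (\<lambda>(t, i, j). t \<in> {0..<T} \<and> i < N \<and> j < N \<and> i \<noteq> j) z \<longrightarrow> \<delta> \<le> (\<lambda>(t, i, j). r i j t) z"
    by (rule uniformly_positive_if_bounded_singular[OF filterlim_compose[OF h_top Psi_sing], where M = M])
      (auto intro: distance_pos bound)
  then show ?thesis by force
qed

lemma ln_abs_Psi_distance_lower_bound:
  "\<exists>lo. \<forall>t\<in>{0..<T}. \<forall>i<N. \<forall>j<N. i \<noteq> j \<longrightarrow> lo \<le> ln \<bar>Psi (r i j t)\<bar>"
proof -
  define R where "R = 2 * (sqrt (kinetic_energy 0) * T) + (\<Sum>k<N. \<Sum>l<N. r k l 0) + 1"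
  have "0 \<le> sqrt (kinetic_energy 0) * T" "0 \<le> (\<Sum>k<N. \<Sum>l<N. r k l 0)"
    using T_pos by (simp_all add: sum_nonneg)
  then have "R > 0" unfolding R_def by linarith
  have "ln \<bar>Psi R\<bar> \<le> ln \<bar>Psi (r i j t)\<bar>" if t: "t \<in> {0..<T}" and ij: "i < N" "j < N" "i \<noteq> j" for t i j
  proof -
    have "r i j t \<le> norm (x i t - x i 0) + r i j 0 + norm (x j 0 - x j t)"
      using norm_triangle_ineq[of "x i t - x i 0" "x i 0 - x j 0"]
        norm_triangle_ineq[of "x i t - x i 0 + (x i 0 - x j 0)" "x j 0 - x j t"]
      by (simp add: algebra_simps)
    moreover have "r i j 0 \<le> (\<Sum>k<N. \<Sum>l<N. r k l 0)"
      using ij by (intro order.trans[OF member_le_sum member_le_sum[of i]]) (auto intro!: sum_nonneg)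
    ultimately have "r i j t \<le> R"
      using displacement_le[OF t ij(1)] displacement_le[OF t ij(2)] unfolding R_def
      by (simp add: norm_minus_commute)
    then have "Psi (r i j t) \<le> Psi R"
      using Psi_mono distance_pos[OF t ij] by blast
    then show ?thesis
      using Psi_neg[OF \<open>R > 0\<close>] Psi_neg[OF distance_pos[OF t ij]] by simp
  qed
  then show ?thesis by blast
qed

lemma L_beta_estimate:
  assumes "\<beta> > 0" and "t \<in> {0..<T}"
  shows "L_beta \<beta> N Psi x t + \<beta> / (2 * C\<^sub>1 * \<gamma> * (real N - 1)) * kinetic_energy t
    \<le> C * ((2 * \<gamma> - 1) * \<beta> / (2 * \<gamma>)) * t + L_beta \<beta> N Psi x 0
      + \<beta> / (2 * C\<^sub>1 * \<gamma> * (real N - 1)) * kinetic_energy 0"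
  using potential_estimate[OF assms(1) has_real_derivative_powr assms(2)]
  unfolding L_beta_eq_potential by (simp add: algebra_simps)

lemma ln_has_real_derivative_powr:
  "\<beta> = 0 \<Longrightarrow> y > 0 \<Longrightarrow> (ln has_real_derivative 1 * y powr (\<beta> - 1)) (at y)"
  using DERIV_ln_divide by (simp add: powr_minus_divide)

lemma L_zero_estimate:
  assumes "\<beta> = 0" and "t \<in> {0..<T}"
  shows "L_zero N Psi x t + 1 / (2 * C\<^sub>1 * \<gamma> * (real N - 1)) * kinetic_energy t
    \<le> C * ((2 * \<gamma> - 1) / (2 * \<gamma>)) * t + L_zero N Psi x 0
      + 1 / (2 * C\<^sub>1 * \<gamma> * (real N - 1)) * kinetic_energy 0"
  using potential_estimate[OF zero_less_one ln_has_real_derivative_powr[OF assms(1)] assms(2)]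
  unfolding L_zero_eq_potential by (simp add: algebra_simps)

lemma agents_separated:
  assumes "\<beta> \<ge> 0"
  shows "\<exists>\<delta>>0. \<forall>t\<in>{0..<T}. \<forall>i<N. \<forall>j<N. i \<noteq> j \<longrightarrow> \<delta> \<le> r i j t"
proof (cases "\<beta> > 0")
  case True
  show ?thesis
    by (rule separated_if_potential_bounded_below[OF True has_real_derivative_powr
          filterlim_powr_at_top[OF True], where lo = 0]) auto
next
  case False
  with assms have "\<beta> = 0" by simp
  obtain lo where "\<forall>t\<in>{0..<T}. \<forall>i<N. \<forall>j<N. i \<noteq> j \<longrightarrow> lo \<le> ln \<bar>Psi (r i j t)\<bar>"
    using ln_abs_Psi_distance_lower_bound by blast
  with separated_if_potential_bounded_below[OF zero_less_one
      ln_has_real_derivative_powr[OF \<open>\<beta> = 0\<close>] ln_at_top]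
  show ?thesis by blast
qed

end

theorem theorem3:
  fixes N :: nat and \<gamma> C\<^sub>1 C \<beta> T :: real
    and Gam :: "'a::euclidean_space \<Rightarrow> 'a"
    and psi Psi :: "real \<Rightarrow> real"
    and x v :: "nat \<Rightarrow> real \<Rightarrow> 'a"
  assumes N2: "N \<ge> 2"
    and gamma: "\<gamma> > 1/2"
    and C1_pos: "C\<^sub>1 > 0"
    and A1: "\<forall>w. Gam (- w) = - Gam w"
    and A2: "\<forall>w. inner (Gam w) w \<ge> C\<^sub>1 * norm w powr (2 * \<gamma>)"
    and psi_pos: "\<forall>s>0. psi s > 0"
    and psi_noninc: "\<forall>s r. 0 < s \<longrightarrow> s \<le> r \<longrightarrow> psi r \<le> psi s"
    and Psi_prim: "\<forall>s>0. (Psi has_real_derivative psi s) (at s)"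
    and Psi_sing: "filterlim (\<lambda>s. \<bar>Psi s\<bar>) at_top (at_right 0)"
    and C_pos: "C > 0"
    and beta: "0 \<le> \<beta>" "\<beta> < 1"
    and growth: "\<forall>s>0. psi s \<le> C * \<bar>Psi s\<bar> powr ((1 - \<beta>) * (2 * \<gamma>) / (2 * \<gamma> - 1))"
    and T_pos: "T > 0"
    and sol: "CS_solution N psi Gam T x v"
  shows "(\<exists>\<delta>>0. \<forall>t\<in>{0..<T}. \<forall>i<N. \<forall>j<N. i \<noteq> j \<longrightarrow> \<delta> \<le> norm (x i t - x j t))
    \<and> (\<beta> > 0 \<longrightarrow> (\<forall>t\<in>{0..<T}.
          L_beta \<beta> N Psi x t + \<beta> / (2 * C\<^sub>1 * \<gamma> * (real N - 1)) * (\<Sum>i<N. (norm (v i t))\<^sup>2)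
          \<le> C * ((2 * \<gamma> - 1) * \<beta> / (2 * \<gamma>)) * t + L_beta \<beta> N Psi x 0
             + \<beta> / (2 * C\<^sub>1 * \<gamma> * (real N - 1)) * (\<Sum>i<N. (norm (v i 0))\<^sup>2)))
    \<and> (\<beta> = 0 \<longrightarrow> (\<forall>t\<in>{0..<T}.
          L_zero N Psi x t + 1 / (2 * C\<^sub>1 * \<gamma> * (real N - 1)) * (\<Sum>i<N. (norm (v i t))\<^sup>2)
          \<le> C * ((2 * \<gamma> - 1) / (2 * \<gamma>)) * t + L_zero N Psi x 0
             + 1 / (2 * C\<^sub>1 * \<gamma> * (real N - 1)) * (\<Sum>i<N. (norm (v i 0))\<^sup>2)))"
proof -
  interpret CS_singular N psi Gam T x v \<gamma> C\<^sub>1 C \<beta> Psi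
    by unfold_locales (use assms in auto)
  show ?thesis
    using agents_separated[OF beta(1)] L_beta_estimate L_zero_estimate by blast
qed

end
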